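(* For all integers $0 \leq k \leq n$, \[ [2]_q^k\,[k]_{q^2}!\,S_B[n,k] \;=\; \sum_{\ell=0}^{k} q^{k(k-2\ell)}\,B_{n,\ell}(q)\,{n-\ell \brack k-\ell}_{q^2}. \]
   Context: For $k\ge 1$, $[k]_q=1+q+\dots+q^{k-1}$, $[0]_q=0$, $[n]_q!=[1]_q[2]_q\cdots[n]_q$ (with $[0]_q!=1$), and ${n\brack k}_q=\frac{[n]_q!}{[k]_q![n-k]_q!}$ for $0\le k\le n$; $[k]_{q^2}!$ and ${\cdot \brack \cdot}_{q^2}$ denote these with $q$ replaced by $q^2$. The type B $q$-Stirling numbers of the second kind $S_B[n,k]$ are defined by $S_B[0,k]=\delta_{0k}$ and $S_B[n,k]=S_B[n-1,k-1]+[2k+1]_q\,S_B[n-1,k]$ for $n\ge1$ (with $S_B[n-1,-1]=0$). Let $\mathcal{B}_n$ be the group of signed permutations of $[n]$, i.e. bijections $\pi$ of $\{\pm1,\dots,\pm n\}$ with $\pi(-i)=-\pi(i)$, written $\pi=\pi_1\cdots\pi_n$ with $\pi_i=\pi(i)$, integers ordered naturally $-n<\dots<-1<0<1<\dots<n$. Set $\pi_0=0$; $\mathrm{Des}_B(\pi)=\{i\in\{0,1,\dots,n-1\}:\pi_i>\pi_{i+1}\}$, $\mathrm{des}_B(\pi)=|\mathrm{Des}_B(\pi)|$, $\mathrm{neg}(\pi)=|\{i\in[n]:\pi_i<0\}|$, and the flag-major index $\mathrm{fmaj}(\pi)=\sum_{i\in\mathrm{Des}_B(\pi)}2i+\mathrm{neg}(\pi)$.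 Define $B_{n,k}(q)$ by $\sum_{\pi\in\mathcal{B}_n}t^{\mathrm{des}_B(\pi)}q^{\mathrm{fmaj}(\pi)}=\sum_{k=0}^n B_{n,k}(q)t^k$. *)

theory Defs
  imports Complex_Main
begin

definition qint :: "real \<Rightarrow> nat \<Rightarrow> real" where
  "qint q k = (\<Sum>i<k. q ^ i)"

definition qfact :: "real \<Rightarrow> nat \<Rightarrow> real" where
  "qfact q n = (\<Prod>i=1..n. qint q i)"

definition qbinom :: "real \<Rightarrow> nat \<Rightarrow> nat \<Rightarrow> real" where
  "qbinom q n k = qfact q n / (qfact q k * qfact q (n - k))"

fun SB :: "real \<Rightarrow> nat \<Rightarrow> nat \<Rightarrow> real" where
  "SB q 0 k = (if k = 0 then 1 else 0)"
| "SB q (Suc n) k = (if k = 0 then 0 else SB q n (k - 1)) + qint q (2 * k + 1) * SB q n k"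

text \<open>Signed permutations of [n]: odd bijections of {-n..n}-{0}, identity outside.
  Oddness forces pi 0 = 0, matching the convention pi_0 = 0.\<close>
definition signed_perms :: "nat \<Rightarrow> (int \<Rightarrow> int) set" where
  "signed_perms n = {p. bij_betw p ({- int n..int n} - {0}) ({- int n..int n} - {0})
      \<and> (\<forall>i. p (- i) = - p i)
      \<and> (\<forall>i. i \<notin> {- int n..int n} - {0} \<longrightarrow> p i = i)}"

definition DesB :: "nat \<Rightarrow> (int \<Rightarrow> int) \<Rightarrow> nat set" where
  "DesB n p = {i. i < n \<and> p (int i) > p (int i + 1)}"

definition desB :: "nat \<Rightarrow> (int \<Rightarrow> int) \<Rightarrow> nat" where
  "desB n p = card (DesB n p)"

definition negB :: "nat \<Rightarrow> (int \<Rightarrow> int) \<Rightarrow> nat" where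
  "negB n p = card {i::nat. 1 \<le> i \<and> i \<le> n \<and> p (int i) < 0}"

definition fmaj :: "nat \<Rightarrow> (int \<Rightarrow> int) \<Rightarrow> nat" where
  "fmaj n p = (\<Sum>i\<in>DesB n p. 2 * i) + negB n p"

text \<open>B_{n,k}(q): coefficient of t^k in the (des_B, fmaj) generating polynomial.\<close>
definition Bnk :: "real \<Rightarrow> nat \<Rightarrow> nat \<Rightarrow> real" where
  "Bnk q n k = (\<Sum>p\<in>{p \<in> signed_perms n. desB n p = k}. q ^ fmaj n p)"

end

theory Submission
  imports Defs
begin

text \<open>
  Both sides satisfy the same recurrence in \<open>n\<close>. On the left this is the defining recurrence of
  \<open>S_B[n,k]\<close>, scaled by \<open>[2]_q^k [k]_{q^2}!\<close>. On the right it follows from the recurrence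
  \<open>B_{n+1,l} = [2l+1]_q B_{n,l} + q^{2l-1} [2n-2l+3]_q B_{n,l-1}\<close> for the flag Eulerian
  polynomials, combined with \<open>q\<^sup>2\<close>-Pascal and absorption for the Gaussian coefficients and an
  identity between products of \<open>q\<close>-integers. The recurrence for \<open>B_{n,l}\<close> comes from building
  a signed permutation of \<open>[n+1]\<close> from its window \<open>\<pi>\<^sub>1 \<dots> \<pi>\<^sub>n\<close> by inserting \<open>n+1\<close> or
  \<open>-(n+1)\<close> into one of \<open>n+1\<close> slots. If \<open>\<pi>\<close> has \<open>d\<close> descents, these \<open>2n+2\<close> insertions
  raise \<open>fmaj\<close> by each of \<open>0, \<dots>, 2d\<close> while keeping \<open>d\<close> descents, and by each of
  \<open>2d+1, \<dots>, 2n+1\<close> while creating one new descent.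
\<close>

section \<open>\<open>q\<close>-integers and Gaussian coefficients\<close>

lemma qint_0 [simp]: "qint q 0 = 0"
  by (simp add: qint_def)

lemma qint_Suc: "qint q (Suc k) = qint q k + q ^ k"
  by (simp add: qint_def)

lemma qint_2: "qint q 2 = 1 + q"
  by (simp add: qint_def numeral_2_eq_2)

lemma qint_add: "qint q (a + b) = qint q a + q ^ a * qint q b"
  by (induction b) (simp_all add: qint_Suc algebra_simps power_add)

lemma qint_even: "qint q (2 * m) = qint q 2 * qint (q^2) m"
proof (induction m)
  case (Suc m)
  have "(q^2)^m = q^(2*m)"
    by (simp add: power_mult)
  with Suc show ?case
    by (simp add: qint_Suc qint_2 algebra_simps)
qed simp

lemma one_minus_mult_qint: "(1 - q) * qint q m = 1 - q ^ m"
proof (induction m)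
  case (Suc m)
  have "(1 - q) * qint q (Suc m) = (1 - q) * qint q m + (1 - q) * q ^ m"
    by (simp add: qint_Suc algebra_simps)
  with Suc show ?case
    by (simp add: algebra_simps)
qed simp

lemma qint_pos: "0 < q \<Longrightarrow> 0 < k \<Longrightarrow> 0 < qint q k"
  unfolding qint_def by (intro sum_pos) auto

lemma qfact_0 [simp]: "qfact q 0 = 1"
  by (simp add: qfact_def)

lemma qfact_Suc: "qfact q (Suc n) = qfact q n * qint q (Suc n)"
  by (simp add: qfact_def prod.nat_ivl_Suc')

lemma qfact_pos: "0 < q \<Longrightarrow> 0 < qfact q n"
  unfolding qfact_def by (intro prod_pos) (auto intro: qint_pos)

lemma qint_product_identity:
  fixes q :: real
  shows "q^(2*j+1) * qint q (2*l+1) * (qint q (2*m) + q^(2*m) * qint q (2*j+2))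
       + qint q (2*m+2*j+1) * qint q (2*j+2)
     = qint q (2*(l+j+1)) * qint q (2*j+2) + q^(2*j+1) * qint q (2*(l+j+1)+1) * qint q (2*m)"
    (is "?L = ?R")
proof (cases "q = 1")
  case True
  then show ?thesis by (simp add: qint_def algebra_simps)
next
  case False
  define f where "f m = (1 - q) * qint q m" for m
  have f: "f m = 1 - q^m" for m
    unfolding f_def by (rule one_minus_mult_qint)
  have "(1-q)^2 * ?L = q^(2*j+1) * f (2*l+1) * (f (2*m) + q^(2*m) * f (2*j+2)) + f (2*m+2*j+1) * f (2*j+2)"
    unfolding f_def by (simp add: algebra_simps power2_eq_square)
  also have "\<dots> = f (2*(l+j+1)) * f (2*j+2) + q^(2*j+1) * f (2*(l+j+1)+1) * f (2*m)"
    unfolding f by (simp add: power_add power_mult algebra_simps)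
  also have "\<dots> = (1-q)^2 * ?R"
    unfolding f_def by (simp add: algebra_simps power2_eq_square)
  finally show ?thesis
    using False by simp
qed

text \<open>For \<open>k > n\<close>, \<open>qbinom x n k\<close> is not \<open>0\<close> (the subtraction \<open>n - k\<close> truncates), so the
  Gaussian coefficient is extended by zero explicitly.\<close>
definition qchoose :: "real \<Rightarrow> nat \<Rightarrow> nat \<Rightarrow> real" where
  "qchoose x n k = (if k \<le> n then qbinom x n k else 0)"

lemma qchoose_0_right [simp]: "0 < x \<Longrightarrow> qchoose x n 0 = 1"
  using qfact_pos[of x n] by (simp add: qchoose_def qbinom_def)

lemma qchoose_eq_0: "n < k \<Longrightarrow> qchoose x n k = 0"
  by (simp add: qchoose_def)

lemma qchoose_self [simp]: "0 < x \<Longrightarrow> qchoose x n n = 1"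
  using qfact_pos[of x n] by (simp add: qchoose_def qbinom_def)

lemma qchoose_Suc_Suc:
  assumes x: "0 < x"
  shows "qchoose x (Suc n) (Suc k) = qchoose x n (Suc k) + x ^ (n - k) * qchoose x n k"
proof (cases "k < n")
  case True
  then obtain m where n: "n = Suc k + m"
    using less_iff_Suc_add by blast
  have pos: "qfact x k > 0" "qfact x m > 0" "qint x (Suc k) > 0" "qint x (Suc m) > 0"
    using qfact_pos qint_pos x by auto
  have split: "qint x (Suc n) = qint x (Suc m) + x ^ Suc m * qint x (Suc k)"
    using qint_add[of x "Suc m" "Suc k"] n by (simp add: add.commute)
  have "qchoose x (Suc n) (Suc k)
      = qfact x n * qint x (Suc n) / (qfact x k * qint x (Suc k) * (qfact x m * qint x (Suc m)))"
    using n by (simp add: qchoose_def qbinom_def qfact_Suc)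
  also have "\<dots> = qfact x n / (qfact x k * qint x (Suc k) * qfact x m)
      + x ^ Suc m * (qfact x n / (qfact x k * (qfact x m * qint x (Suc m))))"
    using pos unfolding split by (simp add: field_simps)
  also have "\<dots> = qchoose x n (Suc k) + x ^ (n - k) * qchoose x n k"
    using n by (simp add: qchoose_def qbinom_def qfact_Suc Suc_diff_le)
  finally show ?thesis .
next
  case False
  then show ?thesis
    using x by (cases "k = n") (simp_all add: qchoose_eq_0)
qed

lemma qchoose_absorb:
  assumes x: "0 < x"
  shows "qint x (Suc k) * qchoose x n (Suc k) = qint x (n - k) * qchoose x n k"
proof (cases "k < n")
  case True
  then obtain m where n: "n = Suc k + m"
    using less_iff_Suc_add by blast
  have "qfact x k > 0" "qfact x m > 0" "qint x (Suc k) > 0" "qint x (Suc m) > 0"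
    using qfact_pos qint_pos x by auto
  then show ?thesis
    using n by (simp add: qchoose_def qbinom_def qfact_Suc Suc_diff_le field_simps)
qed (auto simp: qchoose_def)

lemma qchoose_step_identity:
  fixes q :: real
  assumes q: "0 < q"
  defines "x \<equiv> q^2"
  shows "q^(2*j+1) * qint q (2*l+1) * qchoose x (Suc N) (Suc j) + qint q (2*N+1) * qchoose x N j
       = qint q 2 * qint x (l+j+1) * qchoose x N j
         + q^(2*j+1) * qint q (2*(l+j+1)+1) * qchoose x N (Suc j)"
proof (cases "j \<le> N")
  case False
  then show ?thesis
    by (simp add: qchoose_eq_0)
next
  case True
  then obtain m where N: "N = j + m"
    using le_Suc_ex by blast
  have x: "0 < x"
    using q by (simp add: x_def)
  define A where "A = qchoose x N j"
  define C where "C = qchoose x N (Suc j)"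
  have pascal: "qchoose x (Suc N) (Suc j) = C + q^(2*m) * A"
    using qchoose_Suc_Suc[OF x, of N j] N by (simp add: A_def C_def x_def power_mult)
  have absorb: "qint q (2*j+2) * C = qint q (2*m) * A"
  proof -
    have "qint q (2*j+2) * C = qint q 2 * (qint x (Suc j) * C)"
      using qint_even[of q "Suc j"] by (simp add: x_def)
    also have "\<dots> = qint q (2*m) * A"
      using qchoose_absorb[OF x, of j N] N qint_even[of q m] by (simp add: A_def C_def x_def)
    finally show ?thesis .
  qed
  have even_k: "qint q 2 * qint x (l+j+1) = qint q (2*(l+j+1))"
    by (simp only: x_def qint_even)
  have "qint q (2*j+2) * (q^(2*j+1) * qint q (2*l+1) * qchoose x (Suc N) (Suc j)
          + qint q (2*N+1) * qchoose x N j)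
      = A * (q^(2*j+1) * qint q (2*l+1) * (qint q (2*m) + q^(2*m) * qint q (2*j+2))
          + qint q (2*m+2*j+1) * qint q (2*j+2))"
    unfolding pascal A_def[symmetric] using absorb N by (simp add: algebra_simps)
  also have "\<dots> = A * (qint q (2*(l+j+1)) * qint q (2*j+2)
          + q^(2*j+1) * qint q (2*(l+j+1)+1) * qint q (2*m))"
    by (simp only: qint_product_identity)
  also have "\<dots> = qint q (2*j+2) * (qint q 2 * qint x (l+j+1) * qchoose x N j
          + q^(2*j+1) * qint q (2*(l+j+1)+1) * qchoose x N (Suc j))"
    unfolding even_k A_def[symmetric] C_def[symmetric] using absorb by (simp add: algebra_simps)
  finally show ?thesis
    using qint_pos[OF q, of "2*j+2"] by simp
qed

section \<open>Expansion of \<open>S_B\<close> along the flag Eulerian recurrence\<close>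

definition qweight :: "real \<Rightarrow> nat \<Rightarrow> nat \<Rightarrow> real" where
  "qweight q k l = q powi (int k * (int k - 2 * int l))"

lemma qweight_Suc_Suc:
  assumes "0 < q"
  shows "qweight q (Suc k) (Suc l) * q^(2*l+1) = qweight q k l"
proof -
  have "qweight q (Suc k) (Suc l) * q^(2*l+1)
      = q powi (int (Suc k) * (int (Suc k) - 2 * int (Suc l))) * q powi int (2*l+1)"
    unfolding qweight_def power_int_of_nat ..
  also have "\<dots> = q powi (int (Suc k) * (int (Suc k) - 2 * int (Suc l)) + int (2*l+1))"
    by (rule power_int_add[symmetric]) (use assms in simp)
  also have "\<dots> = qweight q k l"
    unfolding qweight_def by (simp add: algebra_simps)
  finally show ?thesis .
qed

lemma qweight_Suc_left:
  assumes "0 < q" and "l \<le> k"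
  shows "qweight q (Suc k) l = qweight q k l * q^(2*(k-l)+1)"
proof -
  have "qweight q k l * q^(2*(k-l)+1) = q powi (int k * (int k - 2 * int l)) * q powi int (2*(k-l)+1)"
    unfolding qweight_def power_int_of_nat ..
  also have "\<dots> = q powi (int k * (int k - 2 * int l) + int (2*(k-l)+1))"
    by (rule power_int_add[symmetric]) (use assms in simp)
  also have "\<dots> = qweight q (Suc k) l"
    unfolding qweight_def using assms(2) by (simp add: of_nat_diff algebra_simps)
  finally show ?thesis ..
qed

definition flag_expansion :: "real \<Rightarrow> (nat \<Rightarrow> nat \<Rightarrow> real) \<Rightarrow> nat \<Rightarrow> nat \<Rightarrow> real" where
  "flag_expansion q B n k = (\<Sum>l\<le>k. qweight q k l * B n l * qchoose (q^2) (n - l) (k - l))"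

definition flag_eulerian_rec :: "real \<Rightarrow> (nat \<Rightarrow> nat \<Rightarrow> real) \<Rightarrow> bool" where
  "flag_eulerian_rec q B \<longleftrightarrow>
     (\<forall>l. B 0 l = (if l = 0 then 1 else 0)) \<and>
     (\<forall>n l. B (Suc n) l = qint q (2*l+1) * B n l
        + (if l = 0 then 0 else q^(2*l-1) * qint q (2*n+3-2*l) * B n (l-1)))"

lemma flag_eulerian_rec_vanish:
  assumes "flag_eulerian_rec q B" and "n < l"
  shows "B n l = 0"
  using assms(2)
proof (induction n arbitrary: l)
  case 0
  then show ?case
    using assms(1) by (simp add: flag_eulerian_rec_def)
next
  case (Suc n)
  then show ?case
    using assms(1) by (simp add: flag_eulerian_rec_def)
qed

lemma flag_expansion_0:
  assumes "0 < q" and "flag_eulerian_rec q B"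
  shows "flag_expansion q B 0 k = (if k = 0 then 1 else 0)"
proof -
  have "flag_expansion q B 0 k = qweight q k 0 * qchoose (q^2) 0 k"
    using assms(2) by (simp add: flag_expansion_def flag_eulerian_rec_def atMost_atLeast0 sum.atLeast_Suc_atMost)
  then show ?thesis
    using assms(1) by (simp add: qchoose_eq_0 qweight_def)
qed

lemma flag_expansion_0_right: "0 < q \<Longrightarrow> flag_expansion q B n 0 = B n 0"
  by (simp add: flag_expansion_def qweight_def)

lemma flag_expansion_term_step:
  assumes q: "0 < q" and "l \<le> k" and "l \<le> n"
  defines "x \<equiv> q^2"
  shows "qweight q (Suc k) l * qint q (2*l+1) * qchoose x (Suc n - l) (Suc k - l)
       + qweight q (Suc k) (Suc l) * q^(2*l+1) * qint q (2*n+1-2*l) * qchoose x (n - l) (k - l)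
     = qint q 2 * qint x (Suc k) * qweight q k l * qchoose x (n - l) (k - l)
       + qint q (2 * Suc k + 1) * qweight q (Suc k) l * qchoose x (n - l) (Suc k - l)"
proof -
  obtain j N where k: "k = l + j" and n: "n = l + N"
    using assms(2,3) le_Suc_ex by metis
  define w where "w = qweight q k l"
  have idx: "Suc n - l = Suc N" "Suc k - l = Suc j" "n - l = N" "k - l = j"
      "2*n+1-2*l = 2*N+1" "2 * Suc k + 1 = 2*(l+j+1)+1"
    using k n by auto
  have sk: "Suc k = l+j+1"
    using k by simp
  have w1: "qweight q (Suc k) l = w * q^(2*j+1)"
    using qweight_Suc_left[OF q assms(2)] k by (simp add: w_def)
  have w2: "qweight q (Suc k) (Suc l) * q^(2*l+1) = w"
    unfolding w_def by (rule qweight_Suc_Suc[OF q])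
  have "qweight q (Suc k) l * qint q (2*l+1) * qchoose x (Suc n - l) (Suc k - l)
       + qweight q (Suc k) (Suc l) * q^(2*l+1) * qint q (2*n+1-2*l) * qchoose x (n - l) (k - l)
     = w * (q^(2*j+1) * qint q (2*l+1) * qchoose x (Suc N) (Suc j) + qint q (2*N+1) * qchoose x N j)"
    unfolding idx w1 w2 by (simp add: algebra_simps)
  also have "\<dots> = w * (qint q 2 * qint x (l+j+1) * qchoose x N j
         + q^(2*j+1) * qint q (2*(l+j+1)+1) * qchoose x N (Suc j))"
    unfolding x_def by (simp only: qchoose_step_identity[OF q])
  also have "\<dots> = qint q 2 * qint x (Suc k) * qweight q k l * qchoose x (n - l) (k - l)
       + qint q (2 * Suc k + 1) * qweight q (Suc k) l * qchoose x (n - l) (Suc k - l)"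
    unfolding w1 unfolding idx w_def sk by (simp add: algebra_simps)
  finally show ?thesis .
qed

lemma flag_expansion_Suc_Suc:
  assumes q: "0 < q" and B: "flag_eulerian_rec q B"
  defines "x \<equiv> q^2"
  shows "flag_expansion q B (Suc n) (Suc k)
       = qint q 2 * qint x (Suc k) * flag_expansion q B n k
         + qint q (2 * Suc k + 1) * flag_expansion q B n (Suc k)"
proof -
  have x: "0 < x"
    using q by (simp add: x_def)
  define t1 where "t1 l = qweight q (Suc k) l * qint q (2*l+1) * B n l * qchoose x (Suc n - l) (Suc k - l)" for l
  define t2 where "t2 l = qweight q (Suc k) (Suc l) * q^(2*l+1) * qint q (2*n+1-2*l) * B n l
      * qchoose x (n - l) (k - l)" for l
  define s where "s k' l = qweight q k' l * B n l * qchoose x (n - l) (k' - l)" for k' l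
  have rec: "B (Suc n) l = qint q (2*l+1) * B n l
      + (if l = 0 then 0 else q^(2*l-1) * qint q (2*n+3-2*l) * B n (l-1))" for l
    using B by (simp add: flag_eulerian_rec_def)
  have "flag_expansion q B (Suc n) (Suc k) = (\<Sum>l\<le>Suc k. t1 l) + (\<Sum>l\<le>k. t2 l)"
    unfolding flag_expansion_def rec x_def[symmetric] t1_def t2_def
    by (simp add: algebra_simps sum.distrib sum.atMost_Suc_shift del: sum.atMost_Suc)
  also have "\<dots> = (\<Sum>l\<le>k. t1 l + t2 l) + t1 (Suc k)"
    by (simp add: sum.distrib)
  also have "(\<Sum>l\<le>k. t1 l + t2 l)
      = (\<Sum>l\<le>k. qint q 2 * qint x (Suc k) * s k l + qint q (2 * Suc k + 1) * s (Suc k) l)"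
  proof (rule sum.cong)
    fix l assume "l \<in> {..k}"
    then have "l \<le> k"
      by simp
    show "t1 l + t2 l = qint q 2 * qint x (Suc k) * s k l + qint q (2 * Suc k + 1) * s (Suc k) l"
    proof (cases "l \<le> n")
      case True
      have "t1 l + t2 l = B n l * (qweight q (Suc k) l * qint q (2*l+1) * qchoose x (Suc n - l) (Suc k - l)
          + qweight q (Suc k) (Suc l) * q^(2*l+1) * qint q (2*n+1-2*l) * qchoose x (n - l) (k - l))"
        by (simp add: t1_def t2_def algebra_simps)
      also have "\<dots> = B n l * (qint q 2 * qint x (Suc k) * qweight q k l * qchoose x (n - l) (k - l)
          + qint q (2 * Suc k + 1) * qweight q (Suc k) l * qchoose x (n - l) (Suc k - l))"
        unfolding x_def flag_expansion_term_step[OF q \<open>l \<le> k\<close> True] ..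
      also have "\<dots> = qint q 2 * qint x (Suc k) * s k l + qint q (2 * Suc k + 1) * s (Suc k) l"
        by (simp add: s_def algebra_simps)
      finally show ?thesis .
    qed (simp add: t1_def t2_def s_def flag_eulerian_rec_vanish[OF B])
  qed simp
  also have "t1 (Suc k) = qint q (2 * Suc k + 1) * s (Suc k) (Suc k)"
    using x by (simp add: t1_def s_def)
  finally show ?thesis
    by (simp add: flag_expansion_def s_def x_def sum_distrib_left sum.distrib algebra_simps)
qed

lemma SB_eq_flag_expansion:
  assumes q: "0 < q" and B: "flag_eulerian_rec q B"
  shows "qint q 2 ^ k * qfact (q^2) k * SB q n k = flag_expansion q B n k"
proof (induction n arbitrary: k)
  case 0
  then show ?case
    using flag_expansion_0[OF q B] by simp
next
  case (Suc n)
  show ?case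
  proof (cases k)
    case 0
    then show ?thesis
      using Suc.IH[of 0] B by (simp add: flag_expansion_0_right[OF q] flag_eulerian_rec_def)
  next
    case (Suc k')
    have "qint q 2 ^ k * qfact (q^2) k * SB q (Suc n) k
        = qint q 2 * qint (q^2) k * (qint q 2 ^ k' * qfact (q^2) k' * SB q n k')
          + qint q (2 * k + 1) * (qint q 2 ^ k * qfact (q^2) k * SB q n k)"
      using Suc by (simp add: qfact_Suc algebra_simps)
    then show ?thesis
      unfolding Suc.IH Suc flag_expansion_Suc_Suc[OF q B] .
  qed
qed

section \<open>Descents of words and insertion of an extreme letter\<close>

text \<open>\<open>ldes a xs\<close> is the number of descents of the word \<open>a # xs\<close> and \<open>lmaj a k xs\<close> their
  major index shifted by \<open>k\<close>: a descent between positions \<open>i\<close> and \<open>i + 1\<close> of \<open>a # xs\<close>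
  contributes \<open>k + i\<close>.\<close>

fun ldes :: "int \<Rightarrow> int list \<Rightarrow> nat" where
  "ldes a [] = 0"
| "ldes a (x # xs) = (if x < a then 1 else 0) + ldes x xs"

fun lmaj :: "int \<Rightarrow> nat \<Rightarrow> int list \<Rightarrow> nat" where
  "lmaj a k [] = 0"
| "lmaj a k (x # xs) = (if x < a then k else 0) + lmaj x (Suc k) xs"

definition lfmaj :: "int \<Rightarrow> nat \<Rightarrow> int list \<Rightarrow> nat" where
  "lfmaj a k xs = 2 * lmaj a k xs + length (filter (\<lambda>y. y < 0) xs)"

definition insert_nth :: "nat \<Rightarrow> 'a \<Rightarrow> 'a list \<Rightarrow> 'a list" where
  "insert_nth j v xs = take j xs @ v # drop j xs"

lemma insert_nth_0 [simp]: "insert_nth 0 v xs = v # xs"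
  by (simp add: insert_nth_def)

lemma insert_nth_Suc_Cons [simp]: "insert_nth (Suc j) v (x # xs) = x # insert_nth j v xs"
  by (simp add: insert_nth_def)

lemma length_insert_nth: "j \<le> length xs \<Longrightarrow> length (insert_nth j v xs) = Suc (length xs)"
  by (simp add: insert_nth_def)

lemma set_insert_nth [simp]: "set (insert_nth j v xs) = insert v (set xs)"
  by (simp add: insert_nth_def) (metis set_append append_take_drop_id Un_insert_right)

lemma map_insert_nth: "map f (insert_nth j v xs) = insert_nth j (f v) (map f xs)"
  by (simp add: insert_nth_def take_map drop_map)

lemma nth_insert_nth: "j \<le> length xs \<Longrightarrow> insert_nth j v xs ! j = v"
  by (simp add: insert_nth_def nth_append)

lemma distinct_insert_nth: "distinct (insert_nth j v xs) \<longleftrightarrow> distinct xs \<and> v \<notin> set xs"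
proof -
  have "distinct xs \<longleftrightarrow>
      distinct (take j xs) \<and> distinct (drop j xs) \<and> set (take j xs) \<inter> set (drop j xs) = {}"
    by (metis append_take_drop_id distinct_append)
  moreover have "set xs = set (take j xs) \<union> set (drop j xs)"
    by (metis append_take_drop_id set_append)
  ultimately show ?thesis
    unfolding insert_nth_def distinct_append distinct.simps set_simps by blast
qed

lemma insert_nth_take_drop_nth:
  "j < length ys \<Longrightarrow> insert_nth j (ys ! j) (take j ys @ drop (Suc j) ys) = ys"
  by (simp add: insert_nth_def id_take_nth_drop[symmetric])

lemma insert_nth_inject:
  assumes "j \<le> length xs" and "length xs' = length xs"
    and "insert_nth j v xs = insert_nth j v' xs'"
  shows "v = v' \<and> xs = xs'"
proof -
  have "take j xs = take j xs' \<and> v # drop j xs = v' # drop j xs'"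
    using assms by (intro append_eq_append_conv[THEN iffD1]) (auto simp: insert_nth_def)
  then show ?thesis
    by (metis append_take_drop_id list.inject)
qed

lemma lmaj_Suc: "lmaj a (Suc k) xs = lmaj a k xs + ldes a xs"
  by (induction xs arbitrary: a k) auto

lemma ldes_le_length: "ldes a xs \<le> length xs"
  by (induction xs arbitrary: a) (simp_all add: le_SucI)

lemma lfmaj_Cons:
  "lfmaj a k (x # xs) = 2 * (if x < a then k else 0) + lfmaj x (Suc k) xs + (if x < 0 then 1 else 0)"
  by (simp add: lfmaj_def)

lemma sum_insert_extreme:
  fixes g :: "nat \<Rightarrow> nat \<Rightarrow> 'b::comm_monoid_add" and N :: int
  assumes "\<forall>y\<in>set (a # xs). - N < y \<and> y < N"
  shows "(\<Sum>j\<le>length xs. g (ldes a (insert_nth j N xs)) (lfmaj a k (insert_nth j N xs))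
                        + g (ldes a (insert_nth j (-N) xs)) (lfmaj a k (insert_nth j (-N) xs)))
   = (\<Sum>c<2 * ldes a xs + 1. g (ldes a xs) (lfmaj a k xs + c))
     + (\<Sum>c<2 * length xs + 1 - 2 * ldes a xs.
          g (Suc (ldes a xs)) (lfmaj a k xs + 2 * k + 2 * ldes a xs + 1 + c))"
  using assms
proof (induction xs arbitrary: a k g)
  case Nil
  then show ?case
    by (simp add: lfmaj_def insert_nth_def add_ac)
next
  case (Cons x xs)
  have bounds: "\<forall>y\<in>set (x # xs). - N < y \<and> y < N" "- N < x" "x < N" "- N < a" "a < N"
    using Cons.prems by auto
  define d where "d = ldes x xs"
  define P where "P = lfmaj x (Suc k) xs"
  define m where "m = length xs"
  define e where "e = (if x < 0 then 1 else 0::nat)"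
  define \<delta> where "\<delta> = (if x < a then 1 else 0::nat)"
  have "d \<le> m"
    unfolding d_def m_def by (rule ldes_le_length)
  let ?H = "\<lambda>g a k xs j. g (ldes a (insert_nth j N xs)) (lfmaj a k (insert_nth j N xs))
      + g (ldes a (insert_nth j (-N) xs)) (lfmaj a k (insert_nth j (-N) xs))"
  have head: "?H g a k (x # xs) 0
      = g (Suc d) (P + 2 * Suc k + 2 * d + e) + g (Suc d) (P + 2 * k + 2 * d + 1 + e)"
    using bounds by (simp add: d_def P_def e_def lfmaj_def lmaj_Suc add_ac)
  define g' where "g' d f = g (d + \<delta>) (f + 2 * k * \<delta> + e)" for d f
  have "(\<Sum>j\<le>m. ?H g a k (x # xs) (Suc j)) = (\<Sum>j\<le>m. ?H g' x (Suc k) xs j)"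
    by (simp add: lfmaj_Cons g'_def e_def \<delta>_def add_ac)
  also have "\<dots> = (\<Sum>c<2 * d + 1. g' d (P + c))
      + (\<Sum>c<2 * m + 1 - 2 * d. g' (Suc d) (P + 2 * Suc k + 2 * d + 1 + c))"
    unfolding m_def d_def P_def by (rule Cons.IH[OF bounds(1)])
  finally have tail: "(\<Sum>j\<le>m. ?H g a k (x # xs) (Suc j)) = \<dots>" .
  have "(\<Sum>j\<le>length (x # xs). ?H g a k (x # xs) j)
      = g (Suc d) (P + 2 * Suc k + 2 * d + e) + g (Suc d) (P + 2 * k + 2 * d + 1 + e)
        + (\<Sum>c<2 * d + 1. g' d (P + c))
        + (\<Sum>c<2 * m + 1 - 2 * d. g' (Suc d) (P + 2 * Suc k + 2 * d + 1 + c))"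
    unfolding m_def length_Cons sum.atMost_Suc_shift head tail[unfolded m_def] by (simp only: add.assoc)
  also have "\<dots> = (\<Sum>c<2 * ldes a (x # xs) + 1. g (ldes a (x # xs)) (lfmaj a k (x # xs) + c))
     + (\<Sum>c<2 * length (x # xs) + 1 - 2 * ldes a (x # xs).
          g (Suc (ldes a (x # xs))) (lfmaj a k (x # xs) + 2 * k + 2 * ldes a (x # xs) + 1 + c))"
    \<comment> \<open>The two insertions in front of \<open>x\<close> supply the missing terms: the top of the first
      block if \<open>x < a\<close>, the bottom of the second block otherwise.\<close>
  proof (cases "x < a")
    case True
    then have st: "ldes a (x # xs) = Suc d" "lfmaj a k (x # xs) = P + 2 * k + e"
      by (simp_all add: d_def P_def e_def lfmaj_Cons)
    have "g' d' f = g (Suc d') (f + 2 * k + e)" for d' f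
      using True by (simp add: g'_def \<delta>_def)
    moreover have "2 * Suc d + 1 = Suc (Suc (2 * d + 1))"
      "2 * length (x # xs) + 1 - 2 * Suc d = 2 * m + 1 - 2 * d"
      by (simp_all add: m_def)
    ultimately show ?thesis
      unfolding st sum.lessThan_Suc by (simp add: algebra_simps)
  next
    case False
    then have st: "ldes a (x # xs) = d" "lfmaj a k (x # xs) = P + e"
      by (simp_all add: d_def P_def e_def lfmaj_Cons)
    have "g' d' f = g d' (f + e)" for d' f
      using False by (simp add: g'_def \<delta>_def)
    moreover have bound: "2 * length (x # xs) + 1 - 2 * d = Suc (Suc (2 * m + 1 - 2 * d))"
      using \<open>d \<le> m\<close> by (simp add: m_def)
    ultimately show ?thesis
      unfolding st bound sum.lessThan_Suc_shift by (simp add: algebra_simps)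
  qed
  finally show ?case .
qed

section \<open>Signed permutations as words\<close>

definition signed_perm_lists :: "nat \<Rightarrow> int list set" where
  "signed_perm_lists n = {xs. length xs = n \<and> distinct (map abs xs) \<and> set (map abs xs) = {1..int n}}"

lemma mem_signed_perm_lists:
  "xs \<in> signed_perm_lists n \<longleftrightarrow>
     length xs = n \<and> distinct (map abs xs) \<and> set (map abs xs) = {1..int n}"
  by (simp add: signed_perm_lists_def)

lemma signed_perm_lists_abs:
  "xs \<in> signed_perm_lists n \<Longrightarrow> y \<in> set xs \<Longrightarrow> \<bar>y\<bar> \<in> {1..int n}"
  by (auto simp: signed_perm_lists_def)

lemma finite_signed_perm_lists: "finite (signed_perm_lists n)"
proof (rule finite_subset)
  show "signed_perm_lists n \<subseteq> {xs. set xs \<subseteq> {- int n..int n} \<and> length xs = n}"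
    by (force dest: signed_perm_lists_abs simp: signed_perm_lists_def)
qed (rule finite_lists_length_eq, simp)

lemma insert_nth_in_signed_perm_lists:
  assumes xs: "xs \<in> signed_perm_lists n" and j: "j \<le> n" and v: "\<bar>v\<bar> = int n + 1"
  shows "insert_nth j v xs \<in> signed_perm_lists (Suc n)"
proof -
  have abs: "map abs (insert_nth j v xs) = insert_nth j (int n + 1) (map abs xs)"
    by (simp add: map_insert_nth v)
  have "set (map abs xs) = {1..int n}"
    using xs by (simp add: signed_perm_lists_def)
  moreover have "insert (int n + 1) {1..int n} = {1..int (Suc n)}"
    by auto
  ultimately show ?thesis
    using xs j unfolding mem_signed_perm_lists abs
    by (simp add: distinct_insert_nth length_insert_nth)
qed

lemma signed_perm_lists_Suc_decompose:
  assumes ys: "ys \<in> signed_perm_lists (Suc n)"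
  obtains j v xs where "j \<le> n" "\<bar>v\<bar> = int n + 1" "xs \<in> signed_perm_lists n" "ys = insert_nth j v xs"
proof -
  have len: "length ys = Suc n" and dist: "distinct (map abs ys)"
    and set: "set (map abs ys) = {1..int n + 1}"
    using ys by (auto simp: signed_perm_lists_def)
  have "int n + 1 \<in> set (map abs ys)"
    using set by simp
  then obtain j where j: "j < Suc n" "\<bar>ys ! j\<bar> = int n + 1"
    using len by (auto simp: in_set_conv_nth)
  define xs where "xs = take j ys @ drop (Suc j) ys"
  have ys_eq: "ys = insert_nth j (ys ! j) xs"
    unfolding xs_def using j len by (simp add: insert_nth_take_drop_nth)
  have lxs: "length xs = n"
    using j len by (simp add: xs_def)
  have abs_ys: "map abs ys = insert_nth j (int n + 1) (map abs xs)"
    by (subst ys_eq) (simp add: map_insert_nth j)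
  have "distinct (map abs xs)" and notin: "int n + 1 \<notin> set (map abs xs)"
    using dist unfolding abs_ys distinct_insert_nth by auto
  moreover have "set (map abs xs) = {1..int n + 1} - {int n + 1}"
    using set notin unfolding abs_ys set_insert_nth by blast
  moreover have "{1..int n + 1} - {int n + 1} = {1..int n}"
    by auto
  ultimately have "xs \<in> signed_perm_lists n"
    using lxs by (simp add: signed_perm_lists_def)
  then show thesis
    using j ys_eq by (intro that) auto
qed

lemma inj_on_insert_nth_signed_perm_lists:
  "inj_on (\<lambda>(xs, j, v). insert_nth j v xs)
     (signed_perm_lists n \<times> ({..n} \<times> {int n + 1, - (int n + 1)}))"
  (is "inj_on ?f ?D")
proof (rule inj_onI)
  fix t t' assume "t \<in> ?D" "t' \<in> ?D" "?f t = ?f t'"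
  moreover obtain xs j v xs' j' v' where t: "t = (xs, j, v)" "t' = (xs', j', v')"
    by (cases t, cases t')
  ultimately have A: "(xs, j, v) \<in> ?D" "(xs', j', v') \<in> ?D"
    and eq: "insert_nth j v xs = insert_nth j' v' xs'"
    by simp_all
  have l: "length xs = n" "length xs' = n" and jn: "j \<le> n" "j' \<le> n"
    using A by (auto simp: signed_perm_lists_def)
  have "insert_nth j v xs \<in> signed_perm_lists (Suc n)"
    using A by (auto intro: insert_nth_in_signed_perm_lists)
  then have dist: "distinct (map abs (insert_nth j v xs))"
    by (simp add: signed_perm_lists_def)
  have "map abs (insert_nth j v xs) ! j = int n + 1"
    using A l jn by (auto simp: map_insert_nth nth_insert_nth)
  moreover have "map abs (insert_nth j v xs) ! j' = int n + 1"
    using A l jn unfolding eq by (auto simp: map_insert_nth nth_insert_nth)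
  ultimately have "j = j'"
    using nth_eq_iff_index_eq[OF dist, of j j'] l jn by (simp add: length_insert_nth)
  then show "t = t'"
    using insert_nth_inject[of j xs xs' v v'] eq l jn t by simp
qed

lemma bij_betw_insert_nth:
  "bij_betw (\<lambda>(xs, j, v). insert_nth j v xs)
     (signed_perm_lists n \<times> ({..n} \<times> {int n + 1, - (int n + 1)})) (signed_perm_lists (Suc n))"
  (is "bij_betw ?f ?D _")
proof (rule bij_betw_imageI)
  show "inj_on ?f ?D"
    by (rule inj_on_insert_nth_signed_perm_lists)
  show "?f ` ?D = signed_perm_lists (Suc n)"
  proof
    show "?f ` ?D \<subseteq> signed_perm_lists (Suc n)"
      by (auto intro: insert_nth_in_signed_perm_lists)
    show "signed_perm_lists (Suc n) \<subseteq> ?f ` ?D"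
    proof
      fix ys assume "ys \<in> signed_perm_lists (Suc n)"
      then obtain j v xs where j: "j \<le> n" and v: "\<bar>v\<bar> = int n + 1"
          and xs: "xs \<in> signed_perm_lists n" and ys: "ys = insert_nth j v xs"
        by (rule signed_perm_lists_Suc_decompose)
      have "v \<in> {int n + 1, - (int n + 1)}"
        using v by (auto simp: abs_if split: if_splits)
      then have "(xs, j, v) \<in> ?D"
        using j xs by simp
      then show "ys \<in> ?f ` ?D"
        unfolding ys by (rule rev_image_eqI) simp
    qed
  qed
qed

definition window :: "nat \<Rightarrow> (int \<Rightarrow> int) \<Rightarrow> int list" where
  "window n p = map (\<lambda>i. p (int i)) [1..<Suc n]"

definition perm_of_window :: "int list \<Rightarrow> int \<Rightarrow> int" where
  "perm_of_window xs z =
     (if 1 \<le> z \<and> z \<le> int (length xs) then xs ! nat (z - 1)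
      else if 1 \<le> - z \<and> - z \<le> int (length xs) then - (xs ! nat (- z - 1))
      else z)"

lemma length_window [simp]: "length (window n p) = n"
  by (simp add: window_def)

lemma nth_window: "i < n \<Longrightarrow> window n p ! i = p (int (Suc i))"
  by (simp add: window_def del: upt_Suc)

lemma signed_perms_odd: "p \<in> signed_perms n \<Longrightarrow> p (- i) = - p i"
  by (simp add: signed_perms_def)

lemma signed_perms_fixed: "p \<in> signed_perms n \<Longrightarrow> i \<notin> {- int n..int n} - {0} \<Longrightarrow> p i = i"
  by (simp add: signed_perms_def)

lemma window_in_signed_perm_lists:
  assumes p: "p \<in> signed_perms n"
  shows "window n p \<in> signed_perm_lists n"
proof -
  let ?S = "{- int n..int n} - {0}"
  have bij: "bij_betw p ?S ?S"
    using p by (simp add: signed_perms_def)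
  have abs_window: "map abs (window n p) = map (\<lambda>i. \<bar>p (int i)\<bar>) [1..<Suc n]"
    by (simp add: window_def del: upt_Suc)
  have "inj_on (\<lambda>i. \<bar>p (int i)\<bar>) {1..<Suc n}"
  proof (rule inj_onI)
    fix i j assume ij: "i \<in> {1..<Suc n}" "j \<in> {1..<Suc n}" "\<bar>p (int i)\<bar> = \<bar>p (int j)\<bar>"
    then have "p (int i) = p (int j) \<or> p (int i) = p (- int j)"
      using signed_perms_odd[OF p, of "int j"] by (auto simp: abs_eq_iff)
    moreover have "int i \<in> ?S" "int j \<in> ?S" "- int j \<in> ?S"
      using ij by auto
    ultimately have "int i = int j \<or> int i = - int j"
      using bij by (auto simp: bij_betw_def dest: inj_onD)
    then show "i = j"
      using ij by auto
  qed
  then have dist: "distinct (map abs (window n p))"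
    unfolding abs_window by (simp add: distinct_map del: upt_Suc)
  have "\<bar>p (int i)\<bar> \<in> {1..int n}" if "i \<in> {1..<Suc n}" for i
  proof -
    have "p (int i) \<in> ?S"
      using bij_betwE[OF bij] that by auto
    then show ?thesis
      by auto
  qed
  then have "set (map abs (window n p)) \<subseteq> {1..int n}"
    unfolding abs_window by (auto simp del: upt_Suc)
  moreover have "card (set (map abs (window n p))) = card {1..int n}"
    using distinct_card[OF dist] by simp
  ultimately have "set (map abs (window n p)) = {1..int n}"
    by (intro card_subset_eq) auto
  then show ?thesis
    using dist by (simp add: mem_signed_perm_lists)
qed

lemma perm_of_window_window:
  assumes p: "p \<in> signed_perms n"
  shows "perm_of_window (window n p) = p"
proof
  fix z :: int
  consider "1 \<le> z \<and> z \<le> int n" | "1 \<le> - z \<and> - z \<le> int n" | "z \<notin> {- int n..int n} - {0}"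
    by fastforce
  then show "perm_of_window (window n p) z = p z"
  proof cases
    case 1
    then have "perm_of_window (window n p) z = window n p ! nat (z - 1)"
      by (simp add: perm_of_window_def)
    also have "\<dots> = p (int (Suc (nat (z - 1))))"
      using 1 by (intro nth_window) auto
    finally show ?thesis
      using 1 by simp
  next
    case 2
    then have "perm_of_window (window n p) z = - (window n p ! nat (- z - 1))"
      by (simp add: perm_of_window_def)
    also have "\<dots> = - p (int (Suc (nat (- z - 1))))"
      using 2 by (subst nth_window) auto
    finally have "perm_of_window (window n p) z = - p (- z)"
      using 2 by simp
    then show ?thesis
      using signed_perms_odd[OF p, of z] by simp
  next
    case 3
    then have "(1 \<le> z \<and> z \<le> int n) = False" "(1 \<le> - z \<and> - z \<le> int n) = False"
      by auto
    then have "perm_of_window (window n p) z = z"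
      by (simp only: perm_of_window_def length_window if_False)
    then show ?thesis
      using signed_perms_fixed[OF p 3] by simp
  qed
qed

lemma window_perm_of_window: "window (length xs) (perm_of_window xs) = xs"
  by (rule nth_equalityI) (simp_all add: nth_window perm_of_window_def)

lemma perm_of_window_image:
  assumes xs: "xs \<in> signed_perm_lists n"
  shows "perm_of_window xs ` ({- int n..int n} - {0}) = {- int n..int n} - {0}"
    (is "?p ` ?S = ?S")
proof
  have len: "length xs = n" and set: "set (map abs xs) = {1..int n}"
    using xs by (simp_all add: mem_signed_perm_lists)
  show "?p ` ?S \<subseteq> ?S"
  proof
    fix w assume "w \<in> ?p ` ?S"
    then obtain z where z: "z \<in> ?S" "w = ?p z"
      by blast
    then have "\<bar>w\<bar> = \<bar>xs ! nat (\<bar>z\<bar> - 1)\<bar>"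
      using len by (auto simp: perm_of_window_def)
    moreover have "nat (\<bar>z\<bar> - 1) < length xs"
      using z len by auto
    ultimately have "\<bar>w\<bar> \<in> {1..int n}"
      using set by (metis image_eqI list.set_map nth_mem)
    then show "w \<in> ?S"
      by auto
  qed
  show "?S \<subseteq> ?p ` ?S"
  proof
    fix w assume "w \<in> ?S"
    then have "\<bar>w\<bar> \<in> set (map abs xs)"
      using set by auto
    then obtain i where i: "i < n" "\<bar>xs ! i\<bar> = \<bar>w\<bar>"
      using len by (auto simp: in_set_conv_nth)
    have "xs ! i = ?p (int (Suc i))" "- xs ! i = ?p (- int (Suc i))"
      using i len by (simp_all add: perm_of_window_def)
    moreover have "int (Suc i) \<in> ?S" "- int (Suc i) \<in> ?S"
      using i by auto
    moreover have "w = xs ! i \<or> w = - xs ! i"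
      using i(2) by (auto simp: abs_eq_iff)
    ultimately show "w \<in> ?p ` ?S"
      by blast
  qed
qed

lemma perm_of_window_in_signed_perms:
  assumes xs: "xs \<in> signed_perm_lists n"
  shows "perm_of_window xs \<in> signed_perms n"
proof -
  let ?S = "{- int n..int n} - {0}"
  have "length xs = n"
    using xs by (simp add: mem_signed_perm_lists)
  then have "perm_of_window xs z = z" if "z \<notin> ?S" for z
    using that by (auto simp: perm_of_window_def)
  moreover have "perm_of_window xs (- z) = - perm_of_window xs z" for z
    by (simp add: perm_of_window_def)
  moreover have "bij_betw (perm_of_window xs) ?S ?S"
    using perm_of_window_image[OF xs] finite_surj_inj[of ?S "perm_of_window xs"]
    by (simp add: bij_betw_def)
  ultimately show ?thesis
    by (simp add: signed_perms_def)
qed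

lemma bij_betw_window: "bij_betw (window n) (signed_perms n) (signed_perm_lists n)"
proof (rule bij_betw_byWitness[where f' = perm_of_window])
  show "\<forall>xs\<in>signed_perm_lists n. window n (perm_of_window xs) = xs"
    using window_perm_of_window by (auto simp: mem_signed_perm_lists)
qed (auto simp: perm_of_window_window window_in_signed_perm_lists perm_of_window_in_signed_perms)

definition descent_set :: "int \<Rightarrow> int list \<Rightarrow> nat set" where
  "descent_set a xs = {i. i < length xs \<and> (a # xs) ! Suc i < (a # xs) ! i}"

lemma finite_descent_set [simp]: "finite (descent_set a xs)"
  by (simp add: descent_set_def)

lemma descent_set_Cons:
  "descent_set a (x # xs) = (if x < a then {0} else {}) \<union> Suc ` descent_set x xs"
proof (rule set_eqI)
  fix i
  show "i \<in> descent_set a (x # xs) \<longleftrightarrow> i \<in> (if x < a then {0} else {}) \<union> Suc ` descent_set x xs"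
    by (cases i) (auto simp: descent_set_def)
qed

lemma ldes_eq_card: "ldes a xs = card (descent_set a xs)"
proof (induction xs arbitrary: a)
  case Nil
  then show ?case
    by (simp add: descent_set_def)
next
  case (Cons x xs)
  then show ?case
    unfolding descent_set_Cons by (simp add: card_Un_disjoint card_image)
qed

lemma lmaj_eq_sum: "lmaj a k xs = (\<Sum>i\<in>descent_set a xs. k + i)"
proof (induction xs arbitrary: a k)
  case Nil
  then show ?case
    by (simp add: descent_set_def)
next
  case (Cons x xs)
  then show ?case
    unfolding descent_set_Cons by (simp add: sum.union_disjoint sum.reindex)
qed

lemma DesB_eq_descent_set:
  assumes "p \<in> signed_perms n"
  shows "DesB n p = descent_set 0 (window n p)"
proof -
  have "p 0 = 0"
    using signed_perms_odd[OF assms, of 0] by simp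
  then have "(0 # window n p) ! i = p (int i)" if "i < n" for i
    using that by (cases i) (simp_all add: nth_window)
  moreover have "(0 # window n p) ! Suc i = p (int i + 1)" if "i < n" for i
    using that by (simp add: nth_window add.commute)
  ultimately show ?thesis
    by (auto simp: DesB_def descent_set_def)
qed

lemma negB_eq_window: "negB n p = length (filter (\<lambda>y. y < 0) (window n p))"
proof -
  have "length (filter (\<lambda>y. y < 0) (window n p)) = card ({i. p (int i) < 0} \<inter> {1..n})"
    by (simp add: window_def distinct_length_filter atLeastLessThanSuc_atLeastAtMost del: upt_Suc)
  also have "\<dots> = negB n p"
    unfolding negB_def by (rule arg_cong[where f = card]) auto
  finally show ?thesis ..
qed

lemma desB_eq_window: "p \<in> signed_perms n \<Longrightarrow> desB n p = ldes 0 (window n p)"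
  by (simp add: desB_def ldes_eq_card DesB_eq_descent_set)

lemma fmaj_eq_window: "p \<in> signed_perms n \<Longrightarrow> fmaj n p = lfmaj 0 0 (window n p)"
  by (simp add: fmaj_def lfmaj_def lmaj_eq_sum DesB_eq_descent_set negB_eq_window sum_distrib_left)

section \<open>The flag Eulerian recurrence\<close>

definition flag_term :: "real \<Rightarrow> nat \<Rightarrow> int list \<Rightarrow> real" where
  "flag_term q l xs = (if ldes 0 xs = l then q ^ lfmaj 0 0 xs else 0)"

lemma Bnk_eq_sum_signed_perm_lists: "Bnk q n l = (\<Sum>xs\<in>signed_perm_lists n. flag_term q l xs)"
proof -
  have "finite (signed_perms n)"
    using bij_betw_finite[OF bij_betw_window] finite_signed_perm_lists by blast
  then have "Bnk q n l = (\<Sum>p\<in>signed_perms n. if desB n p = l then q ^ fmaj n p else 0)"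
    unfolding Bnk_def by (simp add: sum.inter_filter)
  also have "\<dots> = (\<Sum>p\<in>signed_perms n. flag_term q l (window n p))"
    by (rule sum.cong) (simp_all add: flag_term_def desB_eq_window fmaj_eq_window)
  also have "\<dots> = (\<Sum>xs\<in>signed_perm_lists n. flag_term q l xs)"
    by (rule sum.reindex_bij_betw[OF bij_betw_window])
  finally show ?thesis .
qed

lemma sum_flag_term_insert_nth:
  assumes xs: "xs \<in> signed_perm_lists n"
  defines "N \<equiv> int n + 1"
  shows "(\<Sum>j\<le>n. flag_term q l (insert_nth j N xs) + flag_term q l (insert_nth j (- N) xs))
    = qint q (2*l+1) * flag_term q l xs
      + (if l = 0 then 0 else q^(2*l-1) * qint q (2*n+3-2*l) * flag_term q (l-1) xs)"
proof -
  define g where "g d f = (if d = l then q ^ f else 0)" for d f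
  have geometric: "(\<Sum>c<M. g d (P + c)) = (if d = l then q ^ P * qint q M else 0)" for M d P
    by (simp add: g_def qint_def power_add sum_distrib_left)
  have "\<forall>y\<in>set (0 # xs). - N < y \<and> y < N"
    using signed_perm_lists_abs[OF xs] by (fastforce simp: N_def)
  moreover have "length xs = n"
    using xs by (simp add: mem_signed_perm_lists)
  ultimately have "(\<Sum>j\<le>n. flag_term q l (insert_nth j N xs) + flag_term q l (insert_nth j (- N) xs))
    = (\<Sum>c<2 * ldes 0 xs + 1. g (ldes 0 xs) (lfmaj 0 0 xs + c))
      + (\<Sum>c<2 * n + 1 - 2 * ldes 0 xs. g (Suc (ldes 0 xs)) (lfmaj 0 0 xs + 2 * ldes 0 xs + 1 + c))"
    using sum_insert_extreme[of 0 xs N g 0] by (simp add: flag_term_def g_def)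
  also have "\<dots> = qint q (2*l+1) * flag_term q l xs
      + (if l = 0 then 0 else q^(2*l-1) * qint q (2*n+3-2*l) * flag_term q (l-1) xs)"
    unfolding geometric add.assoc[symmetric]
    by (cases l) (auto simp: flag_term_def power_add)
  finally show ?thesis .
qed

lemma Bnk_Suc:
  "Bnk q (Suc n) l = qint q (2*l+1) * Bnk q n l
     + (if l = 0 then 0 else q^(2*l-1) * qint q (2*n+3-2*l) * Bnk q n (l-1))"
proof -
  define N where "N = int n + 1"
  have "N \<noteq> - N"
    by (simp add: N_def)
  have "Bnk q (Suc n) l = (\<Sum>t\<in>signed_perm_lists n \<times> ({..n} \<times> {N, - N}).
      flag_term q l ((\<lambda>(xs, j, v). insert_nth j v xs) t))"
    unfolding Bnk_eq_sum_signed_perm_lists N_def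
    by (rule sum.reindex_bij_betw[OF bij_betw_insert_nth, symmetric])
  also have "\<dots> = (\<Sum>xs\<in>signed_perm_lists n. \<Sum>j\<le>n. \<Sum>v\<in>{N, - N}.
      flag_term q l (insert_nth j v xs))"
    by (simp add: sum.cartesian_product split_def)
  also have "\<dots> = (\<Sum>xs\<in>signed_perm_lists n. \<Sum>j\<le>n.
      flag_term q l (insert_nth j N xs) + flag_term q l (insert_nth j (- N) xs))"
    using \<open>N \<noteq> - N\<close> by simp
  also have "\<dots> = (\<Sum>xs\<in>signed_perm_lists n. qint q (2*l+1) * flag_term q l xs
      + (if l = 0 then 0 else q^(2*l-1) * qint q (2*n+3-2*l) * flag_term q (l-1) xs))"
    unfolding N_def by (rule sum.cong[OF refl]) (rule sum_flag_term_insert_nth)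
  also have "\<dots> = qint q (2*l+1) * Bnk q n l
     + (if l = 0 then 0 else q^(2*l-1) * qint q (2*n+3-2*l) * Bnk q n (l-1))"
    by (simp add: Bnk_eq_sum_signed_perm_lists sum.distrib sum_distrib_left)
  finally show ?thesis .
qed

lemma flag_eulerian_rec_Bnk: "flag_eulerian_rec q (Bnk q)"
proof -
  have "signed_perm_lists 0 = {[]}"
    by (auto simp: signed_perm_lists_def)
  then have "Bnk q 0 l = (if l = 0 then 1 else 0)" for l
    by (simp add: Bnk_eq_sum_signed_perm_lists flag_term_def lfmaj_def)
  then show ?thesis
    by (simp add: flag_eulerian_rec_def Bnk_Suc)
qed

theorem theorem1p1:
  fixes q :: real and n k :: nat
  assumes "q > 0" and "k \<le> n"
  shows "qint q 2 ^ k * qfact (q^2) k * SB q n k =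
    (\<Sum>l=0..k. q powi (int k * (int k - 2 * int l)) * Bnk q n l * qbinom (q^2) (n - l) (k - l))"
proof -
  have "qint q 2 ^ k * qfact (q^2) k * SB q n k = flag_expansion q (Bnk q) n k"
    using SB_eq_flag_expansion[OF assms(1) flag_eulerian_rec_Bnk] .
  also have "\<dots> = (\<Sum>l=0..k. q powi (int k * (int k - 2 * int l)) * Bnk q n l
      * qbinom (q^2) (n - l) (k - l))"
    unfolding flag_expansion_def qweight_def atLeast0AtMost using assms(2)
    by (intro sum.cong) (auto simp: qchoose_def)
  finally show ?thesis .
qed

end
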